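(* Let $I\subset\mathbb{R}$ be an open interval and let $f:I\to\mathbb{R}$ be a strictly convex function of class $C^{3}$ (i.e. $f''>0$ on $I$), with graph $X$. Then $f$ is a quadratic polynomial if and only if $X$ satisfies the following Condition (A): there is a positive constant $a$, depending only on $X$, such that for every point $P$ on $X$ and every chord $AB$ of $X$ parallel to the tangent line of $X$ at $P$, if $V$ denotes the point where the line through $P$ parallel to the $y$-axis meets the segment $AB$, then the area of the region bounded by $X$ and the chord $AB$ equals $a\,|PV|^{3/2}$.
   Context: A chord $AB$ of $X$ is a segment joining two points $A,B$ of $X$; the "region bounded by $X$ and $AB$" is the region enclosed by the arc of $X$ between $A$ and $B$ and the segment $AB$. $|PV|$ denotes the Euclidean length of the segment $PV$. *)

theory Defs
  imports "HOL-Analysis.Analysis"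
begin

definition C3_with_derivs ::
  "(real \<Rightarrow> real) \<Rightarrow> (real \<Rightarrow> real) \<Rightarrow> (real \<Rightarrow> real) \<Rightarrow> (real \<Rightarrow> real) \<Rightarrow> real set \<Rightarrow> bool" where
  "C3_with_derivs f f1 f2 f3 I \<longleftrightarrow>
     (\<forall>x\<in>I. (f has_real_derivative f1 x) (at x)
           \<and> (f1 has_real_derivative f2 x) (at x)
           \<and> (f2 has_real_derivative f3 x) (at x))
     \<and> continuous_on I f3"

definition chord :: "(real \<Rightarrow> real) \<Rightarrow> real \<Rightarrow> real \<Rightarrow> real \<Rightarrow> real" where
  "chord f s t x = f s + (f t - f s) / (t - s) * (x - s)"

text \<open>Region enclosed by the arc of the graph of f between s and t and the chord
  (for convex f the chord lies above the arc).\<close>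
definition chord_region :: "(real \<Rightarrow> real) \<Rightarrow> real \<Rightarrow> real \<Rightarrow> (real \<times> real) set" where
  "chord_region f s t = {(x, y). s \<le> x \<and> x \<le> t \<and> f x \<le> y \<and> y \<le> chord f s t x}"

definition condition_A :: "(real \<Rightarrow> real) \<Rightarrow> (real \<Rightarrow> real) \<Rightarrow> real set \<Rightarrow> bool" where
  "condition_A f f1 I \<longleftrightarrow>
    (\<exists>a>0. \<forall>p\<in>I. \<forall>s\<in>I. \<forall>t\<in>I.
       s < t \<and> (f t - f s) / (t - s) = f1 p \<and> s \<le> p \<and> p \<le> t \<longrightarrow>
       measure lebesgue (chord_region f s t) = a * \<bar>chord f s t p - f p\<bar> powr (3/2))"

end

theory Submission
  imports Defs
begin

text \<open>
  If \<open>f x = c x\<^sup>2 + c\<^sub>1 x + c\<^sub>0\<close>, the vertical through the point of tangency bisects every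
  chord parallel to the tangent; for half-width \<open>u\<close> the cap has height \<open>c u\<^sup>2\<close> and area
  \<open>4/3 c u\<^sup>3\<close>, so Condition (A) holds with \<open>a = 4 / (3 sqrt c)\<close>.

  Conversely, let \<open>k\<^sub>1 < f'' p < k\<^sub>2\<close>. Near \<open>p\<close>, Taylor's formula squeezes the gap between
  the graph and the tangent at \<open>p\<close> between \<open>k\<^sub>1 (x - p)\<^sup>2 / 2\<close> and \<open>k\<^sub>2 (x - p)\<^sup>2 / 2\<close>.
  Integrating this squeeze over a short chord parallel to that tangent, whose cap has area
  \<open>a H powr (3/2)\<close> for its height \<open>H\<close>, yields \<open>a\<^sup>2 k\<^sub>1 \<le> 32/9\<close> and a lower bound for
  \<open>a\<^sup>2 k\<^sub>2\<close> that tends to \<open>32/9\<close> as \<open>k\<^sub>1, k\<^sub>2 \<rightarrow> f'' p\<close>. Hence \<open>f''\<close> is the constant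
  \<open>32 / (9 a\<^sup>2)\<close> and \<open>f\<close> is quadratic.
\<close>

lemma measure_between_graphs:
  fixes u v :: "real \<Rightarrow> real"
  assumes u: "continuous_on {s..t} u" and v: "continuous_on {s..t} v"
    and le: "\<And>x. x \<in> {s..t} \<Longrightarrow> u x \<le> v x"
  shows "measure lebesgue {(x, y). s \<le> x \<and> x \<le> t \<and> u x \<le> y \<and> y \<le> v x}
           = integral {s..t} (\<lambda>x. v x - u x)"
proof -
  let ?R = "{(x, y). s \<le> x \<and> x \<le> t \<and> u x \<le> y \<and> y \<le> v x}"
  let ?S = "{s..t} \<times> (UNIV :: real set)"
  have cont: "continuous_on ?S (\<lambda>z. u (fst z))" "continuous_on ?S (\<lambda>z. v (fst z))"
    by (auto intro!: continuous_on_compose2[OF u continuous_on_fst]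
        continuous_on_compose2[OF v continuous_on_fst])
  have "?R = {z \<in> ?S. u (fst z) \<le> snd z} \<inter> {z \<in> ?S. snd z \<le> v (fst z)}"
    by auto
  moreover have "closed \<dots>"
    by (intro closed_Int continuous_on_closed_Collect_le cont continuous_intros closed_Times)
  ultimately have R: "?R \<in> sets lborel"
    by simp
  define g where "g x = indicator {s..t} x *\<^sub>R (v x - u x)" for x
  have g_meas: "g \<in> borel_measurable borel"
    unfolding g_def by (intro borel_measurable_continuous_on_indicator continuous_intros u v) auto
  have g_nonneg: "0 \<le> g x" for x
    using le by (auto simp: g_def indicator_def)
  have vu_int: "(\<lambda>x. v x - u x) integrable_on {s..t}"
    by (intro integrable_continuous_interval continuous_intros u v)
  have nonneg: "0 \<le> integral {s..t} (\<lambda>x. v x - u x)"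
    using vu_int le by (intro integral_nonneg) auto
  note integrable_integral[OF vu_int]
  moreover have "g = (\<lambda>x. if x \<in> {s..t} then v x - u x else 0)"
    by (auto simp: g_def)
  ultimately have g_int: "(g has_integral integral {s..t} (\<lambda>x. v x - u x)) UNIV"
    by (simp only: has_integral_restrict_UNIV)
  have slice: "emeasure lborel (Pair x -` ?R) = ennreal (g x)" for x
  proof -
    have "Pair x -` ?R = (if x \<in> {s..t} then {u x..v x} else {})"
      by auto
    then show ?thesis
      using le[of x] by (simp add: g_def)
  qed
  have "emeasure lborel ?R = emeasure (lborel \<Otimes>\<^sub>M lborel) ?R"
    by (simp add: lborel_prod)
  also have "\<dots> = (\<integral>\<^sup>+x. emeasure lborel (Pair x -` ?R) \<partial>lborel)"
    using R by (intro lborel.emeasure_pair_measure_alt) (simp only: lborel_prod)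
  also have "\<dots> = ennreal (integral {s..t} (\<lambda>x. v x - u x))"
    unfolding slice by (rule nn_integral_has_integral_lborel[OF g_meas g_nonneg g_int])
  finally show ?thesis
    using R nonneg by (simp add: measure_def)
qed

lemma measure_chord_region:
  assumes "continuous_on {s..t} f" "convex_on {s..t} f"
  shows "measure lebesgue (chord_region f s t) = integral {s..t} (\<lambda>x. chord f s t x - f x)"
proof -
  have "f x \<le> chord f s t x" if "x \<in> {s..t}" for x
    using convex_onD_Icc'[OF assms(2) that] by (simp add: chord_def algebra_simps)
  moreover have "continuous_on {s..t} (chord f s t)"
    unfolding chord_def
    by (intro continuous_on_add continuous_on_mult_left continuous_on_diff continuous_on_const
        continuous_on_id)
  ultimately show ?thesis
    unfolding chord_region_def by (intro measure_between_graphs assms(1))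
qed

definition tangent_gap :: "(real \<Rightarrow> real) \<Rightarrow> (real \<Rightarrow> real) \<Rightarrow> real \<Rightarrow> real \<Rightarrow> real" where
  "tangent_gap f f' p x = f x - f p - f' p * (x - p)"

lemma tangent_gap_eq_iff_slope:
  assumes "s < t"
  shows "tangent_gap f f' p t = tangent_gap f f' p s \<longleftrightarrow> (f t - f s) / (t - s) = f' p"
proof -
  have "tangent_gap f f' p t - tangent_gap f f' p s = f t - f s - f' p * (t - s)"
    by (simp add: tangent_gap_def algebra_simps)
  then show ?thesis
    using assms by (auto simp: divide_eq_eq)
qed

lemma chord_minus_graph_eq:
  assumes "(f t - f s) / (t - s) = f' p"
  shows "chord f s t x - f x = tangent_gap f f' p s - tangent_gap f f' p x"
  using assms by (simp add: chord_def tangent_gap_def algebra_simps)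

lemma chord_height_eq:
  assumes "(f t - f s) / (t - s) = f' p"
  shows "chord f s t p - f p = tangent_gap f f' p s"
  using chord_minus_graph_eq[where f' = f', OF assms, of p] by (simp add: tangent_gap_def)

lemma tangent_gap_Taylor:
  fixes f f' f'' :: "real \<Rightarrow> real"
  assumes "\<And>y. y \<in> {lo..hi} \<Longrightarrow> (f has_real_derivative f' y) (at y)"
    and "\<And>y. y \<in> {lo..hi} \<Longrightarrow> (f' has_real_derivative f'' y) (at y)"
    and "p \<in> {lo..hi}" "x \<in> {lo..hi}"
  obtains \<xi> where "\<xi> \<in> {lo..hi}" "tangent_gap f f' p x = f'' \<xi> * (x - p)^2 / 2"
proof (cases "x = p")
  case True
  with assms(3) show ?thesis
    by (intro that[of p]) (simp_all add: tangent_gap_def)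
next
  case False
  define diff where "diff m = (if m = 0 then f else if m = 1 then f' else f'')" for m :: nat
  have "\<exists>\<xi>. (if x < p then x < \<xi> \<and> \<xi> < p else p < \<xi> \<and> \<xi> < x) \<and>
    f x = (\<Sum>m<2. diff m p / fact m * (x - p)^m) + diff 2 \<xi> / fact 2 * (x - p)^2"
    using assms False
    by (intro Taylor[of 2 diff f lo hi p x]) (auto simp: diff_def less_2_cases_iff)
  then obtain \<xi> where \<xi>: "if x < p then x < \<xi> \<and> \<xi> < p else p < \<xi> \<and> \<xi> < x"
    and "f x = f p + f' p * (x - p) + f'' \<xi> / 2 * (x - p)^2"
    by (auto simp: diff_def numeral_2_eq_2)
  moreover have "\<xi> \<in> {lo..hi}"
    using \<xi> assms(3,4) by (auto split: if_splits)
  ultimately show ?thesis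
    by (intro that[of \<xi>]) (simp_all add: tangent_gap_def)
qed

lemma tangent_gap_bounds:
  fixes f f' f'' :: "real \<Rightarrow> real"
  assumes "\<And>y. y \<in> {lo..hi} \<Longrightarrow> (f has_real_derivative f' y) (at y)"
    and "\<And>y. y \<in> {lo..hi} \<Longrightarrow> (f' has_real_derivative f'' y) (at y)"
    and bounds: "\<And>y. y \<in> {lo..hi} \<Longrightarrow> k1 \<le> f'' y \<and> f'' y \<le> k2"
    and "p \<in> {lo..hi}" "x \<in> {lo..hi}"
  shows "k1 * (x - p)^2 / 2 \<le> tangent_gap f f' p x \<and> tangent_gap f f' p x \<le> k2 * (x - p)^2 / 2"
proof -
  obtain \<xi> where "\<xi> \<in> {lo..hi}" "tangent_gap f f' p x = f'' \<xi> * (x - p)^2 / 2"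
    using tangent_gap_Taylor[OF assms(1,2,4,5)] by blast
  with bounds[of \<xi>] show ?thesis
    by (auto intro!: divide_right_mono mult_right_mono)
qed

lemma integral_parabola:
  fixes H k p s t :: real
  assumes "s \<le> t"
  shows "integral {s..t} (\<lambda>x. H - k*(x-p)^2/2) = H*(t-s) - k*((t-p)^3 + (p-s)^3)/6"
proof -
  define F where "F x = H*x - k*(x-p)^3/6" for x
  have "((\<lambda>x. H - k*(x-p)^2/2) has_integral (F t - F s)) {s..t}"
    using assms by (intro fundamental_theorem_of_calculus)
      (auto simp: F_def power2_eq_square has_real_derivative_iff_has_vector_derivative[symmetric]
            intro!: derivative_eq_intros)
  moreover have "F t - F s = H*(t-s) - k*((t-p)^3 + (p-s)^3)/6"
    unfolding F_def by (simp add: field_simps power3_eq_cube)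
  ultimately show ?thesis
    by (simp add: integral_unique)
qed

lemma integral_cap_bounds:
  fixes g :: "real \<Rightarrow> real"
  assumes "s \<le> t" "continuous_on {s..t} g"
    and bounds: "\<And>x. x \<in> {s..t} \<Longrightarrow> k1 * (x - p)^2 / 2 \<le> g x \<and> g x \<le> k2 * (x - p)^2 / 2"
  shows "H*(t-s) - k2*((t-p)^3 + (p-s)^3)/6 \<le> integral {s..t} (\<lambda>x. H - g x)"
    and "integral {s..t} (\<lambda>x. H - g x) \<le> H*(t-s) - k1*((t-p)^3 + (p-s)^3)/6"
proof -
  have "(\<lambda>x. H - g x) integrable_on {s..t}"
    by (intro integrable_continuous_interval continuous_intros assms(2))
  moreover have "(\<lambda>x. H - k*(x-p)^2/2) integrable_on {s..t}" for k
    by (intro integrable_continuous_interval continuous_intros) auto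
  ultimately have "integral {s..t} (\<lambda>x. H - k2*(x-p)^2/2) \<le> integral {s..t} (\<lambda>x. H - g x)"
    and "integral {s..t} (\<lambda>x. H - g x) \<le> integral {s..t} (\<lambda>x. H - k1*(x-p)^2/2)"
    using bounds by (auto intro!: integral_le)
  then show "H*(t-s) - k2*((t-p)^3 + (p-s)^3)/6 \<le> integral {s..t} (\<lambda>x. H - g x)"
    and "integral {s..t} (\<lambda>x. H - g x) \<le> H*(t-s) - k1*((t-p)^3 + (p-s)^3)/6"
    by (simp_all add: integral_parabola[OF assms(1)])
qed

lemma powr_three_halves_power2:
  fixes q :: real
  assumes "0 \<le> q"
  shows "(q^2) powr (3/2) = q^3"
proof (cases "q = 0")
  case False
  then have "0 < q"
    using assms by simp
  then have "(q^2) powr (3/2) = (q powr 2) powr (3/2)"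
    by (simp add: powr_numeral)
  also have "\<dots> = q powr 3"
    by (simp add: powr_powr)
  finally show ?thesis
    using \<open>0 < q\<close> by (simp add: powr_numeral)
qed simp

lemma cubic_le_max:
  fixes k q x :: real
  assumes "0 < k" "0 \<le> q" "0 \<le> x"
  shows "q^2*x - k*x^3/6 \<le> 2/3 * sqrt (2/k) * q^3"
proof -
  define r where "r = sqrt (2/k)"
  have "0 \<le> r" and kr: "k * r^2 = 2"
    using assms(1) by (simp_all add: r_def)
  have "k/6 * (x - q*r)^2 * (x + 2*q*r) = k*x^3/6 - (k*r^2)*q^2*x/2 + (k*r^2)*q^3*r/3"
    by (simp add: field_simps power2_eq_square power3_eq_cube)
  then have "2/3 * r * q^3 - (q^2*x - k*x^3/6) = k/6 * (x - q*r)^2 * (x + 2*q*r)"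
    by (simp add: kr mult.commute)
  also have "\<dots> \<ge> 0"
    using assms \<open>0 \<le> r\<close> by (intro mult_nonneg_nonneg) auto
  finally show ?thesis
    by (simp add: r_def)
qed

lemma cubic_ge_fraction_of_linear:
  fixes k1 k2 q x :: real
  assumes "0 < k1" "0 \<le> k2" "0 \<le> x" "k1*x^2 \<le> 2*q^2"
  shows "(3*k1-k2)/(3*k1) * (q^2*x) \<le> q^2*x - k2*x^3/6"
proof -
  have "k2*x^2 \<le> k2*(2*q^2/k1)"
    using assms by (intro mult_left_mono) (simp_all add: field_simps)
  then have "(3*k1-k2)/(3*k1) * q^2 \<le> q^2 - k2*x^2/6"
    using assms(1) by (simp add: field_simps)
  then have "x * ((3*k1-k2)/(3*k1) * q^2) \<le> x * (q^2 - k2*x^2/6)"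
    using assms(3) by (rule mult_left_mono)
  then show ?thesis
    by (simp add: algebra_simps power2_eq_square power3_eq_cube)
qed

text \<open>
  In the next two lemmas \<open>u\<close> and \<open>w\<close> are the distances from \<open>p\<close> to the ends of a chord
  parallel to the tangent at \<open>p\<close>, \<open>q\<^sup>2\<close> is the height of its cap and \<open>a q\<^sup>3\<close> the cap area.
\<close>

lemma cap_area_coefficient_upper:
  fixes a q k u w :: real
  assumes "0 < a" "0 < q" "0 < k" "0 \<le> u" "0 \<le> w"
    and area: "a * q^3 \<le> q^2*(u+w) - k*(u^3 + w^3)/6"
  shows "a^2 * k \<le> 32/9"
proof -
  have "q^2*(u+w) - k*(u^3 + w^3)/6 = (q^2*u - k*u^3/6) + (q^2*w - k*w^3/6)"
    by (simp add: algebra_simps)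
  then have "a * q^3 \<le> (q^2*u - k*u^3/6) + (q^2*w - k*w^3/6)"
    using area by linarith
  also have "\<dots> \<le> 2/3 * sqrt (2/k) * q^3 + 2/3 * sqrt (2/k) * q^3"
    using assms(2-5) by (intro add_mono cubic_le_max) auto
  finally have "a * q^3 \<le> (4/3 * sqrt (2/k)) * q^3"
    by (simp add: algebra_simps)
  then have "a \<le> 4/3 * sqrt (2/k)"
    using assms(2) by simp
  then have "a^2 * k \<le> (4/3 * sqrt (2/k))^2 * k"
    using assms(1,3) by (intro mult_right_mono power_mono) auto
  also have "\<dots> = 16/9 * ((sqrt (2/k))^2 * k)"
    by (simp add: power2_eq_square)
  finally show ?thesis
    using assms(3) by simp
qed

lemma cap_area_coefficient_lower:
  fixes a q k1 k2 u w :: real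
  assumes "0 < q" "0 < k1" "k2 \<le> 3*k1" "0 \<le> u" "0 \<le> w"
    and u: "k1*u^2 \<le> 2*q^2" "2*q^2 \<le> k2*u^2"
    and w: "k1*w^2 \<le> 2*q^2" "2*q^2 \<le> k2*w^2"
    and area: "q^2*(u+w) - k2*(u^3 + w^3)/6 \<le> a * q^3"
  shows "8*((3*k1-k2)/(3*k1))^2 \<le> a^2 * k2"
proof -
  define c where "c = (3*k1-k2)/(3*k1)"
  define \<rho> where "\<rho> = sqrt (2/k2)"
  have "0 < 2 * q^2"
    using \<open>0 < q\<close> by simp
  then have "0 < k2 * u^2"
    using u(2) by linarith
  then have "0 < k2"
    by (simp add: zero_less_mult_iff)
  then have "0 \<le> c" "0 \<le> \<rho>" and k\<rho>: "k2 * \<rho>^2 = 2"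
    using assms(2,3) by (simp_all add: c_def \<rho>_def)
  have "q^2*(u+w) - k2*(u^3 + w^3)/6 = (q^2*u - k2*u^3/6) + (q^2*w - k2*w^3/6)"
    by (simp add: algebra_simps)
  moreover have "c * (q^2*u) + c * (q^2*w) \<le> (q^2*u - k2*u^3/6) + (q^2*w - k2*w^3/6)"
    unfolding c_def using assms(2,4,5) u(1) w(1) \<open>0 < k2\<close>
    by (intro add_mono cubic_ge_fraction_of_linear) auto
  ultimately have "c * (q^2*u) + c * (q^2*w) \<le> a * q^3"
    using area by linarith
  then have "(c * (u+w)) * q^2 \<le> (a * q) * q^2"
    by (simp add: algebra_simps power2_eq_square power3_eq_cube)
  then have cuw: "c * (u+w) \<le> a * q"
    using \<open>0 < q\<close> by simp
  have q\<rho>: "q * \<rho> \<le> x" if "0 \<le> x" "2*q^2 \<le> k2*x^2" for x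
  proof (rule power2_le_imp_le[OF _ that(1)])
    show "(q * \<rho>)^2 \<le> x^2"
      using that(2) \<open>0 < k2\<close> by (simp add: \<rho>_def power_mult_distrib field_simps)
  qed
  have "c * (2 * (q * \<rho>)) \<le> c * (u+w)"
    using q\<rho>[OF assms(4) u(2)] q\<rho>[OF assms(5) w(2)] \<open>0 \<le> c\<close> by (intro mult_left_mono) auto
  then have "q * (2 * c * \<rho>) \<le> q * a"
    using cuw by (simp add: algebra_simps)
  then have "2 * c * \<rho> \<le> a"
    using \<open>0 < q\<close> by simp
  then have "(2 * c * \<rho>)^2 * k2 \<le> a^2 * k2"
    using \<open>0 \<le> c\<close> \<open>0 \<le> \<rho>\<close> \<open>0 < k2\<close> by (intro mult_right_mono power_mono) auto
  moreover have "(2 * c * \<rho>)^2 * k2 = 4 * c^2 * (k2 * \<rho>^2)"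
    by (simp add: power_mult_distrib)
  ultimately show ?thesis
    using k\<rho> by (simp add: c_def)
qed

lemma coefficient_eq_of_bounds:
  fixes a m :: real
  assumes "0 < m"
    and bounds: "\<And>k1 k2. 0 < k1 \<Longrightarrow> k1 < m \<Longrightarrow> m < k2 \<Longrightarrow> k2 \<le> 3*k1 \<Longrightarrow>
                   a^2 * k1 \<le> 32/9 \<and> 8*((3*k1-k2)/(3*k1))^2 \<le> a^2 * k2"
  shows "a^2 * m = 32/9"
proof -
  have small: "\<forall>\<^sub>F e in at_right 0. 0 < e \<and> e < m/2"
    using \<open>0 < m\<close> by (intro eventually_conj eventually_at_right_less)
      (auto simp: eventually_at_right_field intro: exI[of _ "m/2"])
  have near: "a^2 * (m - e) \<le> 32/9 \<and> 8*((3*(m-e)-(m+e))/(3*(m-e)))^2 \<le> a^2 * (m + e)"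
    if "0 < e \<and> e < m/2" for e
    using bounds[of "m - e" "m + e"] that by auto
  have "a^2 * (m - 0) \<le> 32/9"
  proof (rule tendsto_le[OF _ tendsto_const])
    show "((\<lambda>e. a^2 * (m - e)) \<longlongrightarrow> a^2 * (m - 0)) (at_right 0)"
      by (intro tendsto_intros)
    show "\<forall>\<^sub>F e in at_right 0. a^2 * (m - e) \<le> 32/9"
      using small by eventually_elim (use near in auto)
  qed simp
  moreover have "8*((3*(m-0)-(m+0))/(3*(m-0)))^2 \<le> a^2 * (m + 0)"
  proof (rule tendsto_le)
    show "((\<lambda>e. a^2 * (m + e)) \<longlongrightarrow> a^2 * (m + 0)) (at_right 0)"
      by (intro tendsto_intros)
    show "((\<lambda>e. 8*((3*(m-e)-(m+e))/(3*(m-e)))^2) \<longlongrightarrow> 8*((3*(m-0)-(m+0))/(3*(m-0)))^2) (at_right 0)"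
      using \<open>0 < m\<close> by (intro tendsto_intros) auto
    show "\<forall>\<^sub>F e in at_right 0. 8*((3*(m-e)-(m+e))/(3*(m-e)))^2 \<le> a^2 * (m + e)"
      using small by eventually_elim (use near in auto)
  qed simp
  moreover have "8*((3*(m-0)-(m+0))/(3*(m-0)))^2 = (32/9 :: real)"
    using \<open>0 < m\<close> by (simp add: field_simps power2_eq_square)
  ultimately show ?thesis
    by simp
qed

lemma derivatives_of_quadratic:
  fixes f f' f'' :: "real \<Rightarrow> real"
  assumes "open S" "x \<in> S"
    and quadratic: "\<And>y. y \<in> S \<Longrightarrow> f y = c2 * y^2 + c1 * y + c0"
    and f': "\<And>y. y \<in> S \<Longrightarrow> (f has_real_derivative f' y) (at y)"
    and f'': "(f' has_real_derivative f'' x) (at x)"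
  shows "f' x = 2*c2*x + c1" and "f'' x = 2*c2"
proof -
  have quadratic_deriv: "((\<lambda>y. c2 * y^2 + c1 * y + c0) has_real_derivative 2*c2*y + c1) (at y)" for y
    by (auto intro!: derivative_eq_intros)
  have "(f has_real_derivative 2*c2*y + c1) (at y)" if "y \<in> S" for y
    by (rule has_field_derivative_transform_within_open[OF quadratic_deriv assms(1) that])
      (simp add: quadratic)
  then have f'_eq: "f' y = 2*c2*y + c1" if "y \<in> S" for y
    using f' that by (metis DERIV_unique)
  then show "f' x = 2*c2*x + c1"
    using assms(2) .
  have linear_deriv: "((\<lambda>y. 2*c2*y + c1) has_real_derivative 2*c2) (at x)"
    by (auto intro!: derivative_eq_intros)
  have "(f' has_real_derivative 2*c2) (at x)"
    by (rule has_field_derivative_transform_within_open[OF linear_deriv assms(1,2)]) (simp add: f'_eq)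
  then show "f'' x = 2*c2"
    using f'' by (metis DERIV_unique)
qed

lemma quadratic_if_second_derivative_const:
  fixes f f' :: "real \<Rightarrow> real"
  assumes "convex S"
    and f': "\<And>x. x \<in> S \<Longrightarrow> (f has_real_derivative f' x) (at x)"
    and f'': "\<And>x. x \<in> S \<Longrightarrow> (f' has_real_derivative c) (at x)"
  obtains c1 c0 where "\<And>x. x \<in> S \<Longrightarrow> f x = c/2 * x^2 + c1 * x + c0"
proof -
  have "\<exists>c1. \<forall>x\<in>S. f' x - c*x = c1"
  proof (rule has_field_derivative_zero_constant[OF assms(1)])
    fix x assume "x \<in> S"
    then have "((\<lambda>x. f' x - c*x) has_real_derivative 0) (at x)"
      using f''[of x] by (auto intro!: derivative_eq_intros)
    then show "((\<lambda>x. f' x - c*x) has_real_derivative 0) (at x within S)"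
      by (rule has_field_derivative_at_within)
  qed
  then obtain c1 where c1: "\<And>x. x \<in> S \<Longrightarrow> f' x = c*x + c1"
    by (metis add.commute diff_eq_eq)
  have "\<exists>c0. \<forall>x\<in>S. f x - (c/2*x^2 + c1*x) = c0"
  proof (rule has_field_derivative_zero_constant[OF assms(1)])
    fix x assume "x \<in> S"
    then have "((\<lambda>x. f x - (c/2*x^2 + c1*x)) has_real_derivative 0) (at x)"
      using f'[of x] c1[of x] by (auto intro!: derivative_eq_intros)
    then show "((\<lambda>x. f x - (c/2*x^2 + c1*x)) has_real_derivative 0) (at x within S)"
      by (rule has_field_derivative_at_within)
  qed
  then obtain c0 where "\<And>x. x \<in> S \<Longrightarrow> f x - (c/2*x^2 + c1*x) = c0"
    by blast
  then show ?thesis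
    by (intro that[of c1 c0]) (auto simp: algebra_simps)
qed

locale C2_strictly_convex =
  fixes f f1 f2 :: "real \<Rightarrow> real" and I :: "real set"
  assumes interval: "is_interval I" and open_domain: "open I"
    and f1: "\<And>x. x \<in> I \<Longrightarrow> (f has_real_derivative f1 x) (at x)"
    and f2: "\<And>x. x \<in> I \<Longrightarrow> (f1 has_real_derivative f2 x) (at x)"
    and f2_pos: "\<And>x. x \<in> I \<Longrightarrow> 0 < f2 x"
begin

lemma Icc_subset: "s \<in> I \<Longrightarrow> t \<in> I \<Longrightarrow> {s..t} \<subseteq> I"
  using interval unfolding is_interval_1 by (meson atLeastAtMost_iff subsetI)

lemma continuous_on_subset_domain: "S \<subseteq> I \<Longrightarrow> continuous_on S f"
  using f1 by (meson DERIV_continuous continuous_at_imp_continuous_on subsetD)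

lemma measure_chord_region_tangent_gap:
  assumes "s \<in> I" "t \<in> I" and slope: "(f t - f s) / (t - s) = f1 p"
  shows "measure lebesgue (chord_region f s t)
           = integral {s..t} (\<lambda>x. tangent_gap f f1 p s - tangent_gap f f1 p x)"
proof -
  have sub: "{s..t} \<subseteq> I"
    using Icc_subset assms(1,2) .
  have "convex_on {s..t} f"
    using sub by (intro f''_ge0_imp_convex[where f' = f1 and f'' = f2] f1 f2 less_imp_le[OF f2_pos]) auto
  then show ?thesis
    using measure_chord_region[OF continuous_on_subset_domain[OF sub]]
    by (simp add: chord_minus_graph_eq[where f' = f1, OF slope])
qed

lemma quadratic_coefficients:
  assumes quadratic: "\<And>x. x \<in> I \<Longrightarrow> f x = c2 * x^2 + c1 * x + c0" and "x \<in> I"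
  shows "f1 x = 2*c2*x + c1" and "0 < c2"
  using derivatives_of_quadratic[where f' = f1 and f'' = f2, OF open_domain assms(2) quadratic f1 f2]
    f2_pos[OF assms(2)] assms(2) by simp_all

lemma cap_of_quadratic:
  assumes quadratic: "\<And>x. x \<in> I \<Longrightarrow> f x = c2 * x^2 + c1 * x + c0"
    and "p \<in> I" "s \<in> I" "t \<in> I" "s < t" "s \<le> p" "p \<le> t"
    and slope: "(f t - f s) / (t - s) = f1 p"
  shows "chord f s t p - f p = c2 * (p - s)^2"
    and "measure lebesgue (chord_region f s t) = 4/3 * c2 * (p - s)^3"
proof -
  have "0 < c2"
    using quadratic_coefficients[OF quadratic \<open>p \<in> I\<close>] by simp
  have gap: "tangent_gap f f1 p x = c2 * (x - p)^2" if "x \<in> I" for x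
    using that quadratic_coefficients[OF quadratic \<open>p \<in> I\<close>]
    by (simp add: tangent_gap_def quadratic \<open>p \<in> I\<close> algebra_simps power2_eq_square)
  then show "chord f s t p - f p = c2 * (p - s)^2"
    using chord_height_eq[where f' = f1, OF slope] \<open>s \<in> I\<close> by (simp add: power2_commute)
  define u where "u = p - s"
  have "tangent_gap f f1 p t = tangent_gap f f1 p s"
    using tangent_gap_eq_iff_slope[OF \<open>s < t\<close>] slope by simp
  then have "c2 * (t - p)^2 = c2 * (p - s)^2"
    using gap \<open>s \<in> I\<close> \<open>t \<in> I\<close> by (simp add: power2_commute)
  then have "t - p = u"
    using \<open>0 < c2\<close> \<open>s \<le> p\<close> \<open>p \<le> t\<close> by (simp add: u_def)
  then have "t - s = 2*u" "p - s = u"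
    by (simp_all add: u_def)
  have "measure lebesgue (chord_region f s t)
          = integral {s..t} (\<lambda>x. c2 * u^2 - 2*c2 * (x - p)^2 / 2)"
    using measure_chord_region_tangent_gap[OF \<open>s \<in> I\<close> \<open>t \<in> I\<close> slope]
      Icc_subset[OF \<open>s \<in> I\<close> \<open>t \<in> I\<close>] gap \<open>s \<in> I\<close>
    by (auto simp: u_def power2_commute intro!: integral_cong)
  also have "\<dots> = c2 * u^2 * (t - s) - 2*c2 * ((t - p)^3 + (p - s)^3) / 6"
    using \<open>s < t\<close> by (intro integral_parabola) simp
  also have "\<dots> = 4/3 * c2 * u^3"
    using \<open>t - p = u\<close> \<open>t - s = 2*u\<close> \<open>p - s = u\<close>
    by (simp add: power2_eq_square power3_eq_cube field_simps)
  finally show "measure lebesgue (chord_region f s t) = 4/3 * c2 * (p - s)^3"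
    by (simp add: u_def)
qed

lemma condition_A_if_quadratic:
  assumes "I \<noteq> {}" and quadratic: "\<And>x. x \<in> I \<Longrightarrow> f x = c2 * x^2 + c1 * x + c0"
  shows "condition_A f f1 I"
proof -
  have "0 < c2"
    using quadratic_coefficients[OF quadratic] assms(1) by blast
  define a where "a = 4 / (3 * sqrt c2)"
  show ?thesis
    unfolding condition_A_def
  proof (intro exI[of _ a] conjI ballI impI)
    show "0 < a"
      using \<open>0 < c2\<close> by (simp add: a_def)
    fix p s t
    assume "p \<in> I" "s \<in> I" "t \<in> I" "s < t \<and> (f t - f s) / (t - s) = f1 p \<and> s \<le> p \<and> p \<le> t"
    note cap = cap_of_quadratic[OF quadratic this(1-3)] this(4)
    have "a * \<bar>chord f s t p - f p\<bar> powr (3/2) = a * (sqrt c2 * (p - s))^3"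
      using cap \<open>0 < c2\<close> powr_three_halves_power2[of "sqrt c2 * (p - s)"]
      by (simp add: power_mult_distrib)
    also have "\<dots> = 4/3 * c2 * (p - s)^3"
      using \<open>0 < c2\<close> by (simp add: a_def power_mult_distrib power3_eq_cube)
    finally show "measure lebesgue (chord_region f s t) = a * \<bar>chord f s t p - f p\<bar> powr (3/2)"
      using cap by simp
  qed
qed

lemma tangent_gap_bounds_on:
  assumes "{lo..hi} \<subseteq> I" "p \<in> {lo..hi}" "x \<in> {lo..hi}"
    and "\<And>y. y \<in> {lo..hi} \<Longrightarrow> k1 \<le> f2 y \<and> f2 y \<le> k2"
  shows "k1 * (x - p)^2 / 2 \<le> tangent_gap f f1 p x \<and> tangent_gap f f1 p x \<le> k2 * (x - p)^2 / 2"
  using assms by (intro tangent_gap_bounds[where f'' = f2] f1 f2) auto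

lemma continuous_on_tangent_gap: "S \<subseteq> I \<Longrightarrow> continuous_on S (tangent_gap f f1 p)"
  unfolding tangent_gap_def by (intro continuous_intros continuous_on_subset_domain)

lemma parallel_chord_exists:
  assumes "0 < \<delta>" "{p-\<delta>..p+\<delta>} \<subseteq> I" "0 < k1" "k1 \<le> k2"
    and bounds: "\<And>x. x \<in> {p-\<delta>..p+\<delta>} \<Longrightarrow> k1 \<le> f2 x \<and> f2 x \<le> k2"
  obtains s t where "p - \<delta> \<le> s" "s < p" "p < t" "t \<le> p + \<delta>" "(f t - f s) / (t - s) = f1 p"
proof -
  let ?g = "tangent_gap f f1 p"
  have gap: "k1 * (x - p)^2 / 2 \<le> ?g x \<and> ?g x \<le> k2 * (x - p)^2 / 2" if "x \<in> {p-\<delta>..p+\<delta>}" for x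
    using assms(1) that by (intro tangent_gap_bounds_on[OF assms(2)] bounds) auto
  \<comment> \<open>The left endpoint is chosen so close to \<open>p\<close> that the gap there cannot exceed the gap at \<open>p + \<delta>\<close>.\<close>
  define s where "s = p - \<delta> * k1 / k2"
  have "0 < k2"
    using assms(3,4) by simp
  have "\<delta> * k1 / k2 \<le> \<delta>" "0 < \<delta> * k1 / k2"
    using assms(1,3,4) \<open>0 < k2\<close> by (simp_all add: field_simps)
  then have "p - \<delta> \<le> s" "s < p"
    by (simp_all add: s_def)
  then have gap_s: "k1 * (s - p)^2 / 2 \<le> ?g s \<and> ?g s \<le> k2 * (s - p)^2 / 2"
    using assms(1) by (intro gap) auto
  moreover have "0 < k1 * (s - p)^2 / 2"
    using assms(3) \<open>s < p\<close> by simp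
  ultimately have "0 < ?g s"
    by linarith
  have "k2 * (s - p)^2 = k1 * (k1 / k2) * \<delta>^2"
    using \<open>0 < k2\<close> by (simp add: s_def field_simps power2_eq_square)
  also have "\<dots> \<le> k1 * 1 * \<delta>^2"
    using assms(3,4) \<open>0 < k2\<close> by (intro mult_right_mono mult_left_mono) simp_all
  finally have "?g s \<le> ?g (p + \<delta>)"
    using gap_s gap[of "p + \<delta>"] assms(1) by simp
  moreover have "?g p \<le> ?g s"
    using \<open>0 < ?g s\<close> by (simp add: tangent_gap_def)
  moreover have "continuous_on {p..p+\<delta>} ?g"
    using assms(2) by (intro continuous_on_tangent_gap) auto
  ultimately obtain t where "p \<le> t" "t \<le> p + \<delta>" "?g t = ?g s"
    using IVT'[of ?g p "?g s" "p + \<delta>"] assms(1) by auto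
  moreover from this have "t \<noteq> p"
    using \<open>0 < ?g s\<close> by (auto simp: tangent_gap_def)
  ultimately show ?thesis
    using \<open>p - \<delta> \<le> s\<close> \<open>s < p\<close> tangent_gap_eq_iff_slope[of s t f f1 p]
    by (intro that[of s t]) auto
qed

lemma cap_area_coefficient_bounds:
  assumes area: "measure lebesgue (chord_region f s t) = a * \<bar>chord f s t p - f p\<bar> powr (3/2)"
    and "0 < a" "s < p" "p < t" "{s..t} \<subseteq> I" and slope: "(f t - f s) / (t - s) = f1 p"
    and "0 < k1" "k2 \<le> 3*k1" and bounds: "\<And>x. x \<in> {s..t} \<Longrightarrow> k1 \<le> f2 x \<and> f2 x \<le> k2"
  shows "a^2 * k1 \<le> 32/9 \<and> 8*((3*k1-k2)/(3*k1))^2 \<le> a^2 * k2"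
proof -
  let ?g = "tangent_gap f f1 p"
  define H where "H = ?g s"
  define q where "q = sqrt H"
  have "s \<in> I" "t \<in> I" "s < t"
    using assms(3-5) by auto
  have gap: "k1 * (x - p)^2 / 2 \<le> ?g x \<and> ?g x \<le> k2 * (x - p)^2 / 2" if "x \<in> {s..t}" for x
    using assms(3,4) that by (intro tangent_gap_bounds_on[OF assms(5)] bounds) auto
  have gap_s: "k1 * (p - s)^2 \<le> 2 * H \<and> 2 * H \<le> k2 * (p - s)^2"
    using gap[of s] \<open>s < t\<close> by (simp add: H_def power2_commute)
  have "?g t = H"
    using tangent_gap_eq_iff_slope[OF \<open>s < t\<close>] slope by (simp add: H_def)
  then have gap_t: "k1 * (t - p)^2 \<le> 2 * H \<and> 2 * H \<le> k2 * (t - p)^2"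
    using gap[of t] \<open>s < t\<close> by simp
  have "0 < k1 * (p - s)^2"
    using assms(3,7) by simp
  then have "0 < q" "H = q^2"
    using gap_s by (simp_all add: q_def)
  have "a * q^3 = integral {s..t} (\<lambda>x. H - ?g x)"
    using measure_chord_region_tangent_gap[OF \<open>s \<in> I\<close> \<open>t \<in> I\<close> slope] area
      chord_height_eq[where f' = f1, OF slope] \<open>0 < q\<close> \<open>H = q^2\<close>
    by (simp add: H_def powr_three_halves_power2)
  moreover have "continuous_on {s..t} ?g"
    using assms(5) by (rule continuous_on_tangent_gap)
  note integral_cap_bounds[OF less_imp_le[OF \<open>s < t\<close>] this gap, of H]
  moreover have "H * (t - s) = q^2 * ((p - s) + (t - p))"
    using \<open>H = q^2\<close> by simp
  ultimately have upper: "a * q^3 \<le> q^2 * ((p - s) + (t - p)) - k1 * ((p - s)^3 + (t - p)^3) / 6"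
    and lower: "q^2 * ((p - s) + (t - p)) - k2 * ((p - s)^3 + (t - p)^3) / 6 \<le> a * q^3"
    by (simp_all add: add.commute)
  show ?thesis
    using cap_area_coefficient_upper[OF \<open>0 < a\<close> \<open>0 < q\<close> _ _ _ upper]
      cap_area_coefficient_lower[OF \<open>0 < q\<close> \<open>0 < k1\<close> \<open>k2 \<le> 3*k1\<close> _ _ _ _ _ _ lower]
      gap_s gap_t \<open>H = q^2\<close> assms(3,4,7) by simp
qed

lemma f2_bounds_near:
  assumes "p \<in> I" "isCont f2 p" "k1 < f2 p" "f2 p < k2"
  obtains \<delta> where "0 < \<delta>" "{p-\<delta>..p+\<delta>} \<subseteq> I" "\<And>x. x \<in> {p-\<delta>..p+\<delta>} \<Longrightarrow> k1 \<le> f2 x \<and> f2 x \<le> k2"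
proof -
  obtain \<delta>1 where "0 < \<delta>1"
    and close: "\<And>x. dist x p < \<delta>1 \<Longrightarrow> dist (f2 x) (f2 p) < min (f2 p - k1) (k2 - f2 p)"
    using assms(2-4) unfolding continuous_at_eps_delta by (metis diff_gt_0_iff_gt min_less_iff_conj)
  obtain \<delta>2 where "0 < \<delta>2" "ball p \<delta>2 \<subseteq> I"
    using openE[OF open_domain assms(1)] .
  define \<delta> where "\<delta> = min \<delta>1 \<delta>2 / 2"
  have near: "dist x p < \<delta>1" "x \<in> ball p \<delta>2" if "x \<in> {p-\<delta>..p+\<delta>}" for x
    using that \<open>0 < \<delta>1\<close> \<open>0 < \<delta>2\<close> by (auto simp: \<delta>_def dist_real_def)
  show ?thesis
  proof
    show "0 < \<delta>"
      using \<open>0 < \<delta>1\<close> \<open>0 < \<delta>2\<close> by (simp add: \<delta>_def)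
    show "{p-\<delta>..p+\<delta>} \<subseteq> I"
      using near(2) \<open>ball p \<delta>2 \<subseteq> I\<close> by blast
    show "k1 \<le> f2 x \<and> f2 x \<le> k2" if "x \<in> {p-\<delta>..p+\<delta>}" for x
      using close[OF near(1)[OF that]] by (auto simp: dist_real_def)
  qed
qed

lemma coefficient_of_condition_A:
  assumes "0 < a" "p \<in> I" "isCont f2 p"
    and condition: "\<And>s t. s \<in> I \<Longrightarrow> t \<in> I \<Longrightarrow> s < t \<Longrightarrow> (f t - f s) / (t - s) = f1 p \<Longrightarrow>
          s \<le> p \<Longrightarrow> p \<le> t \<Longrightarrow>
          measure lebesgue (chord_region f s t) = a * \<bar>chord f s t p - f p\<bar> powr (3/2)"
  shows "a^2 * f2 p = 32/9"
proof (rule coefficient_eq_of_bounds)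
  show "0 < f2 p"
    using f2_pos[OF assms(2)] .
  fix k1 k2
  assume "0 < k1" "k1 < f2 p" "f2 p < k2" "k2 \<le> 3*k1"
  then obtain \<delta> where "0 < \<delta>" and sub: "{p-\<delta>..p+\<delta>} \<subseteq> I"
    and bounds: "\<And>x. x \<in> {p-\<delta>..p+\<delta>} \<Longrightarrow> k1 \<le> f2 x \<and> f2 x \<le> k2"
    using f2_bounds_near[OF assms(2,3)] by blast
  obtain s t where "p - \<delta> \<le> s" "s < p" "p < t" "t \<le> p + \<delta>"
    and slope: "(f t - f s) / (t - s) = f1 p"
    using parallel_chord_exists[OF \<open>0 < \<delta>\<close> sub \<open>0 < k1\<close> _ bounds] \<open>k1 < f2 p\<close> \<open>f2 p < k2\<close>
    by auto
  then have "{s..t} \<subseteq> {p-\<delta>..p+\<delta>}"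
    by auto
  with sub bounds show "a^2 * k1 \<le> 32/9 \<and> 8*((3*k1-k2)/(3*k1))^2 \<le> a^2 * k2"
    using condition \<open>s < p\<close> \<open>p < t\<close>
    by (intro cap_area_coefficient_bounds[OF _ \<open>0 < a\<close> \<open>s < p\<close> \<open>p < t\<close> _ slope \<open>0 < k1\<close> \<open>k2 \<le> 3*k1\<close>])
      (auto simp: subset_iff slope)
qed

lemma quadratic_if_condition_A:
  assumes "condition_A f f1 I" and "\<And>x. x \<in> I \<Longrightarrow> isCont f2 x"
  shows "\<exists>c2 c1 c0. c2 \<noteq> 0 \<and> (\<forall>x\<in>I. f x = c2 * x^2 + c1 * x + c0)"
proof -
  obtain a where "0 < a" and condition: "\<forall>p\<in>I. \<forall>s\<in>I. \<forall>t\<in>I.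
      s < t \<and> (f t - f s) / (t - s) = f1 p \<and> s \<le> p \<and> p \<le> t \<longrightarrow>
      measure lebesgue (chord_region f s t) = a * \<bar>chord f s t p - f p\<bar> powr (3/2)"
    using assms(1) unfolding condition_A_def by blast
  define c where "c = 32 / (9 * a^2)"
  have "f2 x = c" if "x \<in> I" for x
  proof -
    have "a^2 * f2 x = 32/9"
      by (rule coefficient_of_condition_A[OF \<open>0 < a\<close> that assms(2)[OF that]])
        (use condition that in auto)
    then show ?thesis
      using \<open>0 < a\<close> by (simp add: c_def field_simps)
  qed
  then obtain c1 c0 where "\<And>x. x \<in> I \<Longrightarrow> f x = c/2 * x^2 + c1 * x + c0"
    using quadratic_if_second_derivative_const[OF is_interval_convex[OF interval] f1] f2 by metis
  moreover have "c/2 \<noteq> 0"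
    using \<open>0 < a\<close> by (simp add: c_def)
  ultimately show ?thesis
    by blast
qed

end

theorem theorem1:
  fixes f f1 f2 f3 :: "real \<Rightarrow> real" and I :: "real set"
  assumes "is_interval I" and "open I" and "I \<noteq> {}"
    and "C3_with_derivs f f1 f2 f3 I"
    and "\<forall>x\<in>I. f2 x > 0"
  shows "(\<exists>c2 c1 c0. c2 \<noteq> 0 \<and> (\<forall>x\<in>I. f x = c2 * x^2 + c1 * x + c0))
         \<longleftrightarrow> condition_A f f1 I"
proof -
  have f1: "\<And>x. x \<in> I \<Longrightarrow> (f has_real_derivative f1 x) (at x)"
    and f2: "\<And>x. x \<in> I \<Longrightarrow> (f1 has_real_derivative f2 x) (at x)"
    and f3: "\<And>x. x \<in> I \<Longrightarrow> (f2 has_real_derivative f3 x) (at x)"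
    using assms(4) by (auto simp: C3_with_derivs_def)
  interpret C2_strictly_convex f f1 f2 I
    using assms(1,2,5) f1 f2 by unfold_locales auto
  have "\<And>x. x \<in> I \<Longrightarrow> isCont f2 x"
    using f3 by (rule DERIV_isCont)
  then show ?thesis
    using condition_A_if_quadratic[OF assms(3)] quadratic_if_condition_A by blast
qed

end
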